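(* Let $\Gamma$ be a Hintikka set for $\mathbb{T}_1$. Then there exists $\nu\in\mathcal{F}_{C_1}$ such that $\nu(\varphi)=L$ for every signed formula $\mathsf{L}(\varphi)\in\Gamma$ (where the label $\mathsf{T},\mathsf{t},\mathsf{F}$ corresponds to the value $T,t,F$).
   Context: $\Sigma$ has unary $\neg$ and binary $\wedge,\vee,\to$. $\mathcal{A}_{C_1}$ is the $\Sigma$-multialgebra on $\{F,t,T\}$, $D=\{t,T\}$: $F\tilde\vee F=\{F\}$, $F\tilde\vee T=T\tilde\vee F=T\tilde\vee T=\{T\}$, $x\tilde\vee y=D$ if $t\in\{x,y\}$; $x\tilde\wedge y=\{F\}$ if $F\in\{x,y\}$, $T\tilde\wedge T=\{T\}$, $t\tilde\wedge t=t\tilde\wedge T=T\tilde\wedge t=D$; $\tilde\neg F=\{T\}$, $\tilde\neg t=D$, $\tilde\neg T=\{F\}$; $F\tilde\to F=F\tilde\to T=T\tilde\to T=\{T\}$, $t\tilde\to F=T\tilde\to F=\{F\}$, $x\tilde\to t=D$, $t\tilde\to T=D$. Valuations: maps $\nu$ from formulas to $\{F,t,T\}$ with $\nu(\neg\alpha)\in\tilde\neg\nu(\alpha)$, $\nu(\alpha\#\beta)\in\nu(\alpha)\tilde\#\nu(\beta)$; $\mathcal{F}_{C_1}$ = valuations with $\nu(\alpha)=t\Rightarrow\nu(\alpha\wedge\neg\alpha)=T$. Signed formulas are $\mathsf{L}(\varphi)$ with $\mathsf{L}\in\{\mathsf{T},\mathsf{t},\mathsf{F}\}$. A nonempty set $\Gamma$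 of signed formulas is a Hintikka set for $\mathbb{T}_1$ if: (1) $\mathsf{L}(\varphi),\mathsf{L}'(\varphi)\in\Gamma$ imply $\mathsf{L}=\mathsf{L}'$; (2) no $\mathsf{t}(\varphi\wedge\neg\varphi)$ is in $\Gamma$; (3) $\mathsf{T}(\neg\varphi)\in\Gamma\Rightarrow\mathsf{F}(\varphi)\in\Gamma$ or $\mathsf{t}(\varphi)\in\Gamma$; (4) $\mathsf{t}(\neg\varphi)\in\Gamma\Rightarrow\mathsf{t}(\varphi)\in\Gamma$; (5) $\mathsf{F}(\neg\varphi)\in\Gamma\Rightarrow\mathsf{T}(\varphi)\in\Gamma$; (6) $\mathsf{T}(\varphi\wedge\psi)\in\Gamma\Rightarrow$ $\Gamma$ contains $\mathsf{X}(\varphi)$ and $\mathsf{Y}(\psi)$ for some $\mathsf{X},\mathsf{Y}\in\{\mathsf{T},\mathsf{t}\}$; (7) $\mathsf{t}(\varphi\wedge\psi)\in\Gamma\Rightarrow$ $\Gamma$ contains $\mathsf{T}\varphi,\mathsf{t}\psi$, or $\mathsf{t}\varphi,\mathsf{T}\psi$, or $\mathsf{t}\varphi,\mathsf{t}\psi$; (8) $\mathsf{F}(\varphi\wedge\psi)\in\Gamma\Rightarrow\mathsf{F}(\varphi)\in\Gamma$ or $\mathsf{F}(\psi)\in\Gamma$; (9) $\mathsf{T}(\varphi\vee\psi)\in\Gamma\Rightarrow$ one of $\mathsf{T}\varphi,\mathsf{t}\varphi,\mathsf{T}\psi,\mathsf{t}\psi$ is in $\Gamma$; (10) $\mathsf{t}(\varphi\vee\psi)\in\Gamma\Rightarrow\mathsf{t}(\varphi)\in\Gamma$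 or $\mathsf{t}(\psi)\in\Gamma$; (11) $\mathsf{F}(\varphi\vee\psi)\in\Gamma\Rightarrow\mathsf{F}(\varphi),\mathsf{F}(\psi)\in\Gamma$; (12) $\mathsf{T}(\varphi\to\psi)\in\Gamma\Rightarrow$ one of $\mathsf{F}\varphi,\mathsf{T}\psi,\mathsf{t}\psi$ is in $\Gamma$; (13) $\mathsf{t}(\varphi\to\psi)\in\Gamma\Rightarrow$ either $\mathsf{t}\varphi,\mathsf{T}\psi\in\Gamma$ or $\mathsf{t}\psi\in\Gamma$; (14) $\mathsf{F}(\varphi\to\psi)\in\Gamma\Rightarrow$ either $\mathsf{T}\varphi,\mathsf{F}\psi\in\Gamma$ or $\mathsf{t}\varphi,\mathsf{F}\psi\in\Gamma$. *)

theory Defs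
  imports Main
begin

datatype 'v fm = Var 'v | Neg "'v fm" | Conj "'v fm" "'v fm" | Disj "'v fm" "'v fm" | Imp "'v fm" "'v fm"

datatype tv = Fv | tv | Tv

definition Des :: "tv set" where "Des = {tv, Tv}"

fun mor :: "tv \<Rightarrow> tv \<Rightarrow> tv set" where
  "mor Fv Fv = {Fv}"
| "mor Fv Tv = {Tv}"
| "mor Tv Fv = {Tv}"
| "mor Tv Tv = {Tv}"
| "mor _ _ = Des"

fun mand :: "tv \<Rightarrow> tv \<Rightarrow> tv set" where
  "mand Fv _ = {Fv}"
| "mand _ Fv = {Fv}"
| "mand Tv Tv = {Tv}"
| "mand _ _ = Des"

fun mneg :: "tv \<Rightarrow> tv set" where
  "mneg Fv = {Tv}"
| "mneg tv = Des"
| "mneg Tv = {Fv}"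

fun mimp :: "tv \<Rightarrow> tv \<Rightarrow> tv set" where
  "mimp Fv Fv = {Tv}"
| "mimp Fv Tv = {Tv}"
| "mimp Tv Tv = {Tv}"
| "mimp tv Fv = {Fv}"
| "mimp Tv Fv = {Fv}"
| "mimp _ tv = Des"
| "mimp tv Tv = Des"

definition valuation :: "('v fm \<Rightarrow> tv) \<Rightarrow> bool" where
  "valuation \<nu> \<longleftrightarrow>
     (\<forall>a. \<nu> (Neg a) \<in> mneg (\<nu> a)) \<and>
     (\<forall>a b. \<nu> (Conj a b) \<in> mand (\<nu> a) (\<nu> b)) \<and>
     (\<forall>a b. \<nu> (Disj a b) \<in> mor (\<nu> a) (\<nu> b)) \<and>
     (\<forall>a b. \<nu> (Imp a b) \<in> mimp (\<nu> a) (\<nu> b))"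

definition FC1 :: "('v fm \<Rightarrow> tv) set" where
  "FC1 = {\<nu>. valuation \<nu> \<and> (\<forall>a. \<nu> a = tv \<longrightarrow> \<nu> (Conj a (Neg a)) = Tv)}"

type_synonym 'v sfm = "tv \<times> 'v fm"

definition hintikka :: "'v sfm set \<Rightarrow> bool" where
  "hintikka \<Gamma> \<longleftrightarrow> \<Gamma> \<noteq> {} \<and>
   (\<forall>L L' \<phi>. (L, \<phi>) \<in> \<Gamma> \<longrightarrow> (L', \<phi>) \<in> \<Gamma> \<longrightarrow> L = L') \<and>
   (\<forall>\<phi>. (tv, Conj \<phi> (Neg \<phi>)) \<notin> \<Gamma>) \<and>
   (\<forall>\<phi>. (Tv, Neg \<phi>) \<in> \<Gamma> \<longrightarrow> (Fv, \<phi>) \<in> \<Gamma> \<or> (tv, \<phi>) \<in> \<Gamma>) \<and>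
   (\<forall>\<phi>. (tv, Neg \<phi>) \<in> \<Gamma> \<longrightarrow> (tv, \<phi>) \<in> \<Gamma>) \<and>
   (\<forall>\<phi>. (Fv, Neg \<phi>) \<in> \<Gamma> \<longrightarrow> (Tv, \<phi>) \<in> \<Gamma>) \<and>
   (\<forall>\<phi> \<psi>. (Tv, Conj \<phi> \<psi>) \<in> \<Gamma> \<longrightarrow>
      (\<exists>X Y. X \<in> {Tv, tv} \<and> Y \<in> {Tv, tv} \<and> (X, \<phi>) \<in> \<Gamma> \<and> (Y, \<psi>) \<in> \<Gamma>)) \<and>
   (\<forall>\<phi> \<psi>. (tv, Conj \<phi> \<psi>) \<in> \<Gamma> \<longrightarrow>
      ((Tv, \<phi>) \<in> \<Gamma> \<and> (tv, \<psi>) \<in> \<Gamma>) \<or> ((tv, \<phi>) \<in> \<Gamma> \<and> (Tv, \<psi>) \<in> \<Gamma>) \<or>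
      ((tv, \<phi>) \<in> \<Gamma> \<and> (tv, \<psi>) \<in> \<Gamma>)) \<and>
   (\<forall>\<phi> \<psi>. (Fv, Conj \<phi> \<psi>) \<in> \<Gamma> \<longrightarrow> (Fv, \<phi>) \<in> \<Gamma> \<or> (Fv, \<psi>) \<in> \<Gamma>) \<and>
   (\<forall>\<phi> \<psi>. (Tv, Disj \<phi> \<psi>) \<in> \<Gamma> \<longrightarrow>
      (Tv, \<phi>) \<in> \<Gamma> \<or> (tv, \<phi>) \<in> \<Gamma> \<or> (Tv, \<psi>) \<in> \<Gamma> \<or> (tv, \<psi>) \<in> \<Gamma>) \<and>
   (\<forall>\<phi> \<psi>. (tv, Disj \<phi> \<psi>) \<in> \<Gamma> \<longrightarrow> (tv, \<phi>) \<in> \<Gamma> \<or> (tv, \<psi>) \<in> \<Gamma>) \<and>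
   (\<forall>\<phi> \<psi>. (Fv, Disj \<phi> \<psi>) \<in> \<Gamma> \<longrightarrow> (Fv, \<phi>) \<in> \<Gamma> \<and> (Fv, \<psi>) \<in> \<Gamma>) \<and>
   (\<forall>\<phi> \<psi>. (Tv, Imp \<phi> \<psi>) \<in> \<Gamma> \<longrightarrow>
      (Fv, \<phi>) \<in> \<Gamma> \<or> (Tv, \<psi>) \<in> \<Gamma> \<or> (tv, \<psi>) \<in> \<Gamma>) \<and>
   (\<forall>\<phi> \<psi>. (tv, Imp \<phi> \<psi>) \<in> \<Gamma> \<longrightarrow>
      ((tv, \<phi>) \<in> \<Gamma> \<and> (Tv, \<psi>) \<in> \<Gamma>) \<or> (tv, \<psi>) \<in> \<Gamma>) \<and>
   (\<forall>\<phi> \<psi>. (Fv, Imp \<phi> \<psi>) \<in> \<Gamma> \<longrightarrow>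
      ((Tv, \<phi>) \<in> \<Gamma> \<and> (Fv, \<psi>) \<in> \<Gamma>) \<or> ((tv, \<phi>) \<in> \<Gamma> \<and> (Fv, \<psi>) \<in> \<Gamma>))"

end

theory Submission
  imports Defs
begin

text \<open>Define the valuation by recursion on formulas: a formula labelled in \<open>\<Gamma>\<close> gets its
  label, any other formula gets a value admitted by the multioperation on the values of its
  immediate subformulas, preferring \<open>T\<close>. Each Hintikka clause says precisely that the label
  of a compound formula is admitted by the multioperation on the labels forced on its parts,
  so the result is a valuation. It is restricted because \<open>t \<and> x\<close> admits \<open>T\<close> for every
  designated \<open>x\<close>, and clause (2) together with (5) and (8) forbids a labelled \<open>\<alpha> \<and> \<not>\<alpha>\<close>
  to be anything but \<open>T\<close> once \<open>\<alpha>\<close> has value \<open>t\<close>.\<close>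

definition realizes :: "('v fm \<Rightarrow> tv) \<Rightarrow> 'v sfm set \<Rightarrow> bool" where
  "realizes \<nu> \<Gamma> \<longleftrightarrow> (\<forall>L \<phi>. (L, \<phi>) \<in> \<Gamma> \<longrightarrow> \<nu> \<phi> = L)"

lemma realizesD: "realizes \<nu> \<Gamma> \<Longrightarrow> (L, \<phi>) \<in> \<Gamma> \<Longrightarrow> \<nu> \<phi> = L"
  by (simp add: realizes_def)

lemma hintikkaD:
  assumes "hintikka \<Gamma>"
  shows hintikka_label_unique: "(L, \<phi>) \<in> \<Gamma> \<Longrightarrow> (L', \<phi>) \<in> \<Gamma> \<Longrightarrow> L = L'"
    and hintikka_no_t_Conj_Neg: "(tv, Conj \<phi> (Neg \<phi>)) \<notin> \<Gamma>"
    and hintikka_T_Neg: "(Tv, Neg \<phi>) \<in> \<Gamma> \<Longrightarrow> (Fv, \<phi>) \<in> \<Gamma> \<or> (tv, \<phi>) \<in> \<Gamma>"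
    and hintikka_t_Neg: "(tv, Neg \<phi>) \<in> \<Gamma> \<Longrightarrow> (tv, \<phi>) \<in> \<Gamma>"
    and hintikka_F_Neg: "(Fv, Neg \<phi>) \<in> \<Gamma> \<Longrightarrow> (Tv, \<phi>) \<in> \<Gamma>"
    and hintikka_T_Conj: "(Tv, Conj \<phi> \<psi>) \<in> \<Gamma> \<Longrightarrow>
      \<exists>X Y. X \<in> {Tv, tv} \<and> Y \<in> {Tv, tv} \<and> (X, \<phi>) \<in> \<Gamma> \<and> (Y, \<psi>) \<in> \<Gamma>"
    and hintikka_t_Conj: "(tv, Conj \<phi> \<psi>) \<in> \<Gamma> \<Longrightarrow>
      ((Tv, \<phi>) \<in> \<Gamma> \<and> (tv, \<psi>) \<in> \<Gamma>) \<or> ((tv, \<phi>) \<in> \<Gamma> \<and> (Tv, \<psi>) \<in> \<Gamma>) \<or>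
      ((tv, \<phi>) \<in> \<Gamma> \<and> (tv, \<psi>) \<in> \<Gamma>)"
    and hintikka_F_Conj: "(Fv, Conj \<phi> \<psi>) \<in> \<Gamma> \<Longrightarrow> (Fv, \<phi>) \<in> \<Gamma> \<or> (Fv, \<psi>) \<in> \<Gamma>"
    and hintikka_T_Disj: "(Tv, Disj \<phi> \<psi>) \<in> \<Gamma> \<Longrightarrow>
      (Tv, \<phi>) \<in> \<Gamma> \<or> (tv, \<phi>) \<in> \<Gamma> \<or> (Tv, \<psi>) \<in> \<Gamma> \<or> (tv, \<psi>) \<in> \<Gamma>"
    and hintikka_t_Disj: "(tv, Disj \<phi> \<psi>) \<in> \<Gamma> \<Longrightarrow> (tv, \<phi>) \<in> \<Gamma> \<or> (tv, \<psi>) \<in> \<Gamma>"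
    and hintikka_F_Disj: "(Fv, Disj \<phi> \<psi>) \<in> \<Gamma> \<Longrightarrow> (Fv, \<phi>) \<in> \<Gamma> \<and> (Fv, \<psi>) \<in> \<Gamma>"
    and hintikka_T_Imp: "(Tv, Imp \<phi> \<psi>) \<in> \<Gamma> \<Longrightarrow>
      (Fv, \<phi>) \<in> \<Gamma> \<or> (Tv, \<psi>) \<in> \<Gamma> \<or> (tv, \<psi>) \<in> \<Gamma>"
    and hintikka_t_Imp: "(tv, Imp \<phi> \<psi>) \<in> \<Gamma> \<Longrightarrow>
      ((tv, \<phi>) \<in> \<Gamma> \<and> (Tv, \<psi>) \<in> \<Gamma>) \<or> (tv, \<psi>) \<in> \<Gamma>"
    and hintikka_F_Imp: "(Fv, Imp \<phi> \<psi>) \<in> \<Gamma> \<Longrightarrow>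
      ((Tv, \<phi>) \<in> \<Gamma> \<and> (Fv, \<psi>) \<in> \<Gamma>) \<or> ((tv, \<phi>) \<in> \<Gamma> \<and> (Fv, \<psi>) \<in> \<Gamma>)"
  using assms[unfolded hintikka_def] by meson+

lemma hintikka_Neg_admissible:
  assumes h: "hintikka \<Gamma>" and r: "realizes \<nu> \<Gamma>" and L: "(L, Neg \<phi>) \<in> \<Gamma>"
  shows "L \<in> mneg (\<nu> \<phi>)"
proof (cases L)
  case Fv
  then show ?thesis using hintikka_F_Neg[OF h] L realizesD[OF r] by fastforce
next
  case tv
  then show ?thesis using hintikka_t_Neg[OF h] L realizesD[OF r] by (fastforce simp: Des_def)
next
  case Tv
  then have "\<nu> \<phi> = Fv \<or> \<nu> \<phi> = tv" using hintikka_T_Neg[OF h] L realizesD[OF r] by blast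
  with Tv show ?thesis by (auto simp: Des_def)
qed

lemma hintikka_Conj_admissible:
  assumes h: "hintikka \<Gamma>" and r: "realizes \<nu> \<Gamma>" and L: "(L, Conj \<phi> \<psi>) \<in> \<Gamma>"
  shows "L \<in> mand (\<nu> \<phi>) (\<nu> \<psi>)"
proof (cases L)
  case Fv
  then have "\<nu> \<phi> = Fv \<or> \<nu> \<psi> = Fv" using hintikka_F_Conj[OF h] L realizesD[OF r] by blast
  with Fv show ?thesis by (cases "\<nu> \<phi>") auto
next
  case tv
  then have "\<nu> \<phi> = Tv \<and> \<nu> \<psi> = tv \<or> \<nu> \<phi> = tv \<and> \<nu> \<psi> = Tv \<or> \<nu> \<phi> = tv \<and> \<nu> \<psi> = tv"
    using hintikka_t_Conj[OF h] L realizesD[OF r] by blast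
  with tv show ?thesis by (auto simp: Des_def)
next
  case Tv
  then have "\<nu> \<phi> \<in> {Tv, tv} \<and> \<nu> \<psi> \<in> {Tv, tv}"
    using hintikka_T_Conj[OF h] L realizesD[OF r] by blast
  with Tv show ?thesis by (auto simp: Des_def)
qed

lemma hintikka_Disj_admissible:
  assumes h: "hintikka \<Gamma>" and r: "realizes \<nu> \<Gamma>" and L: "(L, Disj \<phi> \<psi>) \<in> \<Gamma>"
  shows "L \<in> mor (\<nu> \<phi>) (\<nu> \<psi>)"
proof (cases L)
  case Fv
  then have "\<nu> \<phi> = Fv \<and> \<nu> \<psi> = Fv" using hintikka_F_Disj[OF h] L realizesD[OF r] by blast
  with Fv show ?thesis by simp
next
  case tv
  then have "\<nu> \<phi> = tv \<or> \<nu> \<psi> = tv" using hintikka_t_Disj[OF h] L realizesD[OF r] by blast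
  with tv show ?thesis by (cases "\<nu> \<phi>"; cases "\<nu> \<psi>") (auto simp: Des_def)
next
  case Tv
  then have "\<nu> \<phi> \<in> {Tv, tv} \<or> \<nu> \<psi> \<in> {Tv, tv}"
    using hintikka_T_Disj[OF h] L realizesD[OF r] by blast
  with Tv show ?thesis by (cases "\<nu> \<phi>"; cases "\<nu> \<psi>") (auto simp: Des_def)
qed

lemma hintikka_Imp_admissible:
  assumes h: "hintikka \<Gamma>" and r: "realizes \<nu> \<Gamma>" and L: "(L, Imp \<phi> \<psi>) \<in> \<Gamma>"
  shows "L \<in> mimp (\<nu> \<phi>) (\<nu> \<psi>)"
proof (cases L)
  case Fv
  then have "\<nu> \<phi> \<in> {Tv, tv} \<and> \<nu> \<psi> = Fv" using hintikka_F_Imp[OF h] L realizesD[OF r] by blast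
  with Fv show ?thesis by auto
next
  case tv
  then have "\<nu> \<phi> = tv \<and> \<nu> \<psi> = Tv \<or> \<nu> \<psi> = tv" using hintikka_t_Imp[OF h] L realizesD[OF r] by blast
  with tv show ?thesis by (cases "\<nu> \<phi>") (auto simp: Des_def)
next
  case Tv
  then have "\<nu> \<phi> = Fv \<or> \<nu> \<psi> \<in> {Tv, tv}" using hintikka_T_Imp[OF h] L realizesD[OF r] by blast
  with Tv show ?thesis by (cases "\<nu> \<phi>"; cases "\<nu> \<psi>") (auto simp: Des_def)
qed

lemma hintikka_Conj_Neg_label:
  assumes h: "hintikka \<Gamma>" and r: "realizes \<nu> \<Gamma>" and t: "\<nu> \<phi> = tv"
    and L: "(L, Conj \<phi> (Neg \<phi>)) \<in> \<Gamma>"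
  shows "L = Tv"
proof -
  have "L \<noteq> tv" using hintikka_no_t_Conj_Neg[OF h] L by blast
  moreover have "L \<noteq> Fv"
  proof
    assume "L = Fv"
    then have "(Fv, \<phi>) \<in> \<Gamma> \<or> (Tv, \<phi>) \<in> \<Gamma>"
      using hintikka_F_Conj[OF h] hintikka_F_Neg[OF h] L by blast
    then show False using t realizesD[OF r] by fastforce
  qed
  ultimately show ?thesis by (cases L) auto
qed

definition pick_value :: "tv set \<Rightarrow> tv" where
  "pick_value S = (if Tv \<in> S then Tv else if Fv \<in> S then Fv else tv)"

lemma pick_value_in: "S \<noteq> {} \<Longrightarrow> pick_value S \<in> S"
  by (metis pick_value_def tv.exhaust ex_in_conv)

lemma multioperations_nonempty:
  "mneg x \<noteq> {}" "mand x y \<noteq> {}" "mor x y \<noteq> {}" "mimp x y \<noteq> {}"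
  by (cases x; cases y; simp add: Des_def)+

definition label_or :: "'v sfm set \<Rightarrow> tv \<Rightarrow> 'v fm \<Rightarrow> tv" where
  "label_or \<Gamma> d \<phi> = (if \<exists>L. (L, \<phi>) \<in> \<Gamma> then THE L. (L, \<phi>) \<in> \<Gamma> else d)"

lemma label_or_labelled:
  assumes "hintikka \<Gamma>" "(L, \<phi>) \<in> \<Gamma>"
  shows "label_or \<Gamma> d \<phi> = L"
  using assms hintikka_label_unique[OF assms(1)] unfolding label_or_def
  by (auto intro: the_equality)

lemma label_or_in:
  assumes h: "hintikka \<Gamma>" and labels: "\<And>L. (L, \<phi>) \<in> \<Gamma> \<Longrightarrow> L \<in> S" and "d \<in> S"
  shows "label_or \<Gamma> d \<phi> \<in> S"
proof (cases "\<exists>L. (L, \<phi>) \<in> \<Gamma>")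
  case True
  then obtain L where "(L, \<phi>) \<in> \<Gamma>" by blast
  then show ?thesis using label_or_labelled[OF h] labels by simp
qed (simp add: label_or_def \<open>d \<in> S\<close>)

fun canonical_val :: "'v sfm set \<Rightarrow> 'v fm \<Rightarrow> tv" where
  "canonical_val \<Gamma> (Var p) = label_or \<Gamma> Fv (Var p)"
| "canonical_val \<Gamma> (Neg a) = label_or \<Gamma> (pick_value (mneg (canonical_val \<Gamma> a))) (Neg a)"
| "canonical_val \<Gamma> (Conj a b) =
     label_or \<Gamma> (pick_value (mand (canonical_val \<Gamma> a) (canonical_val \<Gamma> b))) (Conj a b)"
| "canonical_val \<Gamma> (Disj a b) =
     label_or \<Gamma> (pick_value (mor (canonical_val \<Gamma> a) (canonical_val \<Gamma> b))) (Disj a b)"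
| "canonical_val \<Gamma> (Imp a b) =
     label_or \<Gamma> (pick_value (mimp (canonical_val \<Gamma> a) (canonical_val \<Gamma> b))) (Imp a b)"

lemma canonical_val_realizes:
  assumes "hintikka \<Gamma>"
  shows "realizes (canonical_val \<Gamma>) \<Gamma>"
  unfolding realizes_def
proof (intro allI impI)
  fix L \<phi> assume "(L, \<phi>) \<in> \<Gamma>"
  then show "canonical_val \<Gamma> \<phi> = L" by (cases \<phi>) (simp_all add: label_or_labelled[OF assms])
qed

lemma canonical_val_valuation:
  assumes h: "hintikka \<Gamma>"
  shows "valuation (canonical_val \<Gamma>)"
  unfolding valuation_def
proof (intro conjI allI)
  note r = canonical_val_realizes[OF h]
  fix a b
  show "canonical_val \<Gamma> (Neg a) \<in> mneg (canonical_val \<Gamma> a)"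
    unfolding canonical_val.simps(2)
    by (rule label_or_in[OF h hintikka_Neg_admissible[OF h r]
          pick_value_in[OF multioperations_nonempty(1)]])
  show "canonical_val \<Gamma> (Conj a b) \<in> mand (canonical_val \<Gamma> a) (canonical_val \<Gamma> b)"
    unfolding canonical_val.simps(3)
    by (rule label_or_in[OF h hintikka_Conj_admissible[OF h r]
          pick_value_in[OF multioperations_nonempty(2)]])
  show "canonical_val \<Gamma> (Disj a b) \<in> mor (canonical_val \<Gamma> a) (canonical_val \<Gamma> b)"
    unfolding canonical_val.simps(4)
    by (rule label_or_in[OF h hintikka_Disj_admissible[OF h r]
          pick_value_in[OF multioperations_nonempty(3)]])
  show "canonical_val \<Gamma> (Imp a b) \<in> mimp (canonical_val \<Gamma> a) (canonical_val \<Gamma> b)"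
    unfolding canonical_val.simps(5)
    by (rule label_or_in[OF h hintikka_Imp_admissible[OF h r]
          pick_value_in[OF multioperations_nonempty(4)]])
qed

lemma canonical_val_Conj_Neg:
  assumes h: "hintikka \<Gamma>" and t: "canonical_val \<Gamma> \<phi> = tv"
  shows "canonical_val \<Gamma> (Conj \<phi> (Neg \<phi>)) = Tv"
proof -
  have "canonical_val \<Gamma> (Neg \<phi>) \<in> Des"
    using canonical_val_valuation[OF h] t unfolding valuation_def by (metis mneg.simps(2))
  then have "pick_value (mand (canonical_val \<Gamma> \<phi>) (canonical_val \<Gamma> (Neg \<phi>))) = Tv"
    using t by (auto simp: Des_def pick_value_def simp del: canonical_val.simps)
  then have "canonical_val \<Gamma> (Conj \<phi> (Neg \<phi>)) \<in> {Tv}"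
    unfolding canonical_val.simps(3)
    using hintikka_Conj_Neg_label[OF h canonical_val_realizes[OF h] t]
    by (intro label_or_in[OF h]) auto
  then show ?thesis by simp
qed

theorem mainTheorem16:
  fixes \<Gamma> :: "'v sfm set"
  assumes "hintikka \<Gamma>"
  shows "\<exists>\<nu> \<in> FC1. \<forall>L \<phi>. (L, \<phi>) \<in> \<Gamma> \<longrightarrow> \<nu> \<phi> = L"
proof
  show "canonical_val \<Gamma> \<in> FC1"
    unfolding FC1_def using canonical_val_valuation canonical_val_Conj_Neg assms by blast
  show "\<forall>L \<phi>. (L, \<phi>) \<in> \<Gamma> \<longrightarrow> canonical_val \<Gamma> \<phi> = L"
    using canonical_val_realizes[OF assms] unfolding realizes_def .
qed

end
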